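(* Let $m\ge 1$, $k\ge 2$ and $n\ge k-1$. Let $P(\mathbf x)=\prod_{i=1}^n\big((x_i-1)^{\underline m}\big)^k$. Let $P_0$ be the unique polynomial in $V_{m,k}$ such that $P-P_0$ has a zero of multiplicity at least $k$ at every point of $mB^n\setminus\{\mathbf 0\}$ and a zero of multiplicity at least $k-1$ at $\mathbf 0$. Then the homogeneous component of $P_0$ of degree $mn+(m+1)(k-1)-1$ is divisible by $(x_1\cdots x_n)^m$.
   Context: $mB^n=\{0,1,\ldots,m\}^n$. Falling factorials are $(y)^{\underline 0}=1$ and $(y)^{\underline j}=y(y-1)\cdots(y-j+1)$ for $j\ge1$, so $(x_i-1)^{\underline m}=(x_i-1)(x_i-2)\cdots(x_i-m)$. A polynomial has a zero of multiplicity at least $k$ at $\mathbf a$ if all its partial derivatives of order less than $k$ vanish at $\mathbf a$. For an integer $k\ge 2$, a polynomial $Q\in\mathbb{R}[x_1,\ldots,x_n]$ is called $(m,k)$-reduced if two conditions hold: $\deg Q\le mn+(m+1)(k-1)-1$, and no monomial of $Q$ is divisible by $x_{i_1}^{m+1}\cdots x_{i_k}^{m+1}$ for any indices $i_1,\ldots,i_k$ (not necessarily distinct). $V_{m,k}$ is the space of $(m,k)$-reduced polynomials. The existence and uniqueness of $P_0$ are known. *)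

theory Defs
  imports "HOL-Computational_Algebra.Polynomial"
begin

text \<open>Real polynomials in the variables x_0,...,x_(n-1) are represented by their
  coefficient functions on exponent vectors (monomials) alpha :: nat => nat.\<close>

type_synonym mpoly = "(nat \<Rightarrow> nat) \<Rightarrow> real"

definition is_mpoly :: "nat \<Rightarrow> mpoly \<Rightarrow> bool" where
  "is_mpoly n Q \<longleftrightarrow> finite {\<alpha>. Q \<alpha> \<noteq> 0} \<and> (\<forall>\<alpha>. Q \<alpha> \<noteq> 0 \<longrightarrow> (\<forall>i\<ge>n. \<alpha> i = 0))"

definition mdeg :: "nat \<Rightarrow> (nat \<Rightarrow> nat) \<Rightarrow> nat" where
  "mdeg n \<alpha> = (\<Sum>i<n. \<alpha> i)"

definition meval :: "nat \<Rightarrow> mpoly \<Rightarrow> (nat \<Rightarrow> real) \<Rightarrow> real" where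
  "meval n Q a = (\<Sum>\<alpha>\<in>{\<alpha>. Q \<alpha> \<noteq> 0}. Q \<alpha> * (\<Prod>i<n. a i ^ \<alpha> i))"

definition mone :: mpoly where
  "mone \<alpha> = (if \<alpha> = (\<lambda>_. 0) then 1 else 0)"

definition mminus :: "mpoly \<Rightarrow> mpoly \<Rightarrow> mpoly" where
  "mminus A B = (\<lambda>\<alpha>. A \<alpha> - B \<alpha>)"

definition mmul :: "mpoly \<Rightarrow> mpoly \<Rightarrow> mpoly" where
  "mmul A B = (\<lambda>\<alpha>. \<Sum>\<beta>\<in>{\<beta>. A \<beta> \<noteq> 0}.
       \<Sum>\<gamma>\<in>{\<gamma>. B \<gamma> \<noteq> 0 \<and> (\<lambda>i. \<beta> i + \<gamma> i) = \<alpha>}. A \<beta> * B \<gamma>)"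

definition var_poly :: "nat \<Rightarrow> real poly \<Rightarrow> mpoly" where
  "var_poly i g = (\<lambda>\<alpha>. if (\<forall>j. j \<noteq> i \<longrightarrow> \<alpha> j = 0) then coeff g (\<alpha> i) else 0)"

definition prod_vars :: "nat \<Rightarrow> real poly \<Rightarrow> mpoly" where
  "prod_vars n g = foldr (\<lambda>i acc. mmul (var_poly i g) acc) [0..<n] mone"

text \<open>Falling factorial (y - 1)(y - 2)...(y - m) as a univariate polynomial.\<close>
definition shifted_ffact :: "nat \<Rightarrow> real poly" where
  "shifted_ffact m = (\<Prod>j\<in>{1..m}. [:- of_nat j, 1:])"

definition pd :: "nat \<Rightarrow> mpoly \<Rightarrow> mpoly" where
  "pd i Q = (\<lambda>\<alpha>. of_nat (Suc (\<alpha> i)) * Q (\<alpha>(i := Suc (\<alpha> i))))"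

definition hpd :: "nat \<Rightarrow> (nat \<Rightarrow> nat) \<Rightarrow> mpoly \<Rightarrow> mpoly" where
  "hpd n \<beta> Q = foldr (\<lambda>i R. (pd i ^^ \<beta> i) R) [0..<n] Q"

definition zero_mult_ge :: "nat \<Rightarrow> mpoly \<Rightarrow> (nat \<Rightarrow> real) \<Rightarrow> nat \<Rightarrow> bool" where
  "zero_mult_ge n Q a k \<longleftrightarrow>
     (\<forall>\<beta>. (\<forall>i\<ge>n. \<beta> i = 0) \<longrightarrow> mdeg n \<beta> < k \<longrightarrow> meval n (hpd n \<beta> Q) a = 0)"

definition reduced :: "nat \<Rightarrow> nat \<Rightarrow> nat \<Rightarrow> mpoly \<Rightarrow> bool" where
  "reduced n m k Q \<longleftrightarrow> is_mpoly n Q \<and>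
     (\<forall>\<alpha>. Q \<alpha> \<noteq> 0 \<longrightarrow> mdeg n \<alpha> \<le> m * n + (m + 1) * (k - 1) - 1) \<and>
     (\<forall>\<alpha>. Q \<alpha> \<noteq> 0 \<longrightarrow>
        \<not> (\<exists>c::nat \<Rightarrow> nat. (\<Sum>i<n. c i) = k \<and> (\<forall>i<n. (m + 1) * c i \<le> \<alpha> i)))"

definition hom_comp :: "nat \<Rightarrow> nat \<Rightarrow> mpoly \<Rightarrow> mpoly" where
  "hom_comp n d Q = (\<lambda>\<alpha>. if mdeg n \<alpha> = d then Q \<alpha> else 0)"

definition xprod_pow :: "nat \<Rightarrow> nat \<Rightarrow> mpoly" where
  "xprod_pow n m = (\<lambda>\<alpha>. if (\<forall>i<n. \<alpha> i = m) \<and> (\<forall>i\<ge>n. \<alpha> i = 0) then 1 else 0)"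

definition mdvd :: "nat \<Rightarrow> mpoly \<Rightarrow> mpoly \<Rightarrow> bool" where
  "mdvd n A B \<longleftrightarrow> (\<exists>R. is_mpoly n R \<and> B = mmul A R)"

end

(*
  Let x^\<alpha> be a monomial of P0 of the top degree with \<alpha>_j < m, and put
  C_i = \<alpha>_i div (m + 1); reducedness gives \<Sum> C_i < k, and C_j = 0.  For a in the grid
  {0..m}^n and \<beta> \<le> C, the derivative \<partial>^\<beta>(x_j P0)(a) equals a_j \<partial>^\<beta> P0(a).  This is 0
  trivially if a_j = 0, and otherwise equals a_j \<partial>^\<beta> P(a) = 0, since |\<beta>| < k, \<beta>_j = 0 and
  P vanishes wherever x_j \<in> {1..m}.  Reducing one variable at a time, it follows that the
  remainder of x_j P0 modulo the univariate polynomials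
  H_i(x_i) = \<Prod>_{t \<le> m} (x_i - t)^(C_i + 1) is zero.  But deg H_i = (m + 1)(C_i + 1) exceeds
  every exponent of x_j x^\<alpha>, and every other monomial of x_j P0 has at most the same degree,
  hence a smaller exponent somewhere; so the coefficient of x_j x^\<alpha> in that remainder is
  P0_\<alpha> \<noteq> 0.
*)
theory Submission
  imports Defs "HOL-Library.FuncSet"
begin

section \<open>Univariate polynomials vanishing to given order on a finite set\<close>

lemma poly_higher_pderiv_monom:
  "poly ((pderiv ^^ b) (monom 1 e)) (x :: 'a :: field_char_0) =
     (if b \<le> e then pochhammer (of_nat (e - b) + 1) b * x ^ (e - b) else 0)"
proof -
  have "(pderiv ^^ b) (monom 1 e) =
          (if b \<le> e then monom (pochhammer (of_nat (e - b) + 1) b) (e - b) else (0 :: 'a poly))"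
    by (rule poly_eqI) (auto simp: coeff_higher_pderiv coeff_monom add.commute)
  then show ?thesis by (simp add: poly_monom)
qed

lemma poly_higher_pderiv_sum_monom:
  fixes w :: "'b \<Rightarrow> 'a :: field_char_0"
  shows "poly ((pderiv ^^ b) (\<Sum>s\<in>S. monom (w s) (E s))) x =
     (\<Sum>s\<in>S. w s * poly ((pderiv ^^ b) (monom 1 (E s))) x)"
proof -
  have "monom (w s) (E s) = smult (w s) (monom 1 (E s))" for s by (simp add: smult_monom)
  then show ?thesis by (simp only: higher_pderiv_sum poly_sum higher_pderiv_smult poly_smult)
qed

lemma linear_power_dvd_of_higher_pderiv_zero:
  fixes u :: "'a :: field_char_0 poly"
  assumes "\<forall>b\<le>c. poly ((pderiv ^^ b) u) t = 0"
  shows "[:-t, 1:] ^ Suc c dvd u"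
  using assms
proof (induction c arbitrary: u)
  case 0
  then show ?case by (simp add: poly_eq_0_iff_dvd)
next
  case (Suc c)
  have "poly ((pderiv ^^ b) (pderiv u)) t = 0" if "b \<le> c" for b
    using Suc.prems[rule_format, of "Suc b"] that by (simp del: funpow.simps add: funpow_Suc_right)
  then have "\<forall>b\<le>c. poly ((pderiv ^^ b) (pderiv u)) t = 0" by blast
  then have pderiv_dvd: "[:-t, 1:] ^ Suc c dvd pderiv u" by (rule Suc.IH)
  have root: "poly u t = 0" using Suc.prems by auto
  show ?case
  proof (cases "pderiv u = 0")
    case True
    then obtain a where "u = [:a:]" using pderiv_iszero by blast
    with root show ?thesis by simp
  next
    case False
    then have "u \<noteq> 0" by auto
    have "Suc c \<le> order t (pderiv u)" using pderiv_dvd False order_divides by blast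
    also have "Suc (order t (pderiv u)) = order t u" using order_pderiv[OF \<open>u \<noteq> 0\<close> root] ..
    finally show ?thesis using order_divides by (metis Suc_le_mono)
  qed
qed

lemma prod_linear_powers_dvd:
  fixes u :: "'a :: field_char_0 poly"
  assumes "finite T" and "\<forall>t\<in>T. [:-t, 1:] ^ c dvd u"
  shows "(\<Prod>t\<in>T. [:-t, 1:] ^ c) dvd u"
  using assms
proof (induction T rule: finite_induct)
  case empty
  then show ?case by simp
next
  case (insert x T)
  show ?case
  proof (cases "u = 0")
    case False
    obtain q where q: "u = (\<Prod>t\<in>T. [:-t, 1:] ^ c) * q"
      using insert by (auto elim: dvdE)
    have "poly (\<Prod>t\<in>T. [:-t, 1:] ^ c) x \<noteq> 0"
      using insert.hyps by (auto simp: poly_prod)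
    then have "order x (\<Prod>t\<in>T. [:-t, 1:] ^ c) = 0" by (simp add: order_root)
    then have "order x u = order x q" using q False by (simp add: order_mult)
    moreover have "c \<le> order x u" using insert.prems False order_divides by blast
    ultimately have "[:-x, 1:] ^ c dvd q" using order_divides by auto
    then show ?thesis using q insert.hyps by (simp add: mult.commute mult_dvd_mono)
  qed simp
qed

definition vanishing_poly :: "'a :: comm_ring_1 set \<Rightarrow> nat \<Rightarrow> 'a poly" where
  "vanishing_poly T c = (\<Prod>t\<in>T. [:-t, 1:] ^ Suc c)"

lemma vanishing_poly_dvd:
  fixes u :: "'a :: field_char_0 poly"
  assumes "finite T" and "\<forall>t\<in>T. \<forall>b\<le>c. poly ((pderiv ^^ b) u) t = 0"
  shows "vanishing_poly T c dvd u"
proof -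
  have "\<forall>t\<in>T. [:-t, 1:] ^ Suc c dvd u"
    using assms(2) linear_power_dvd_of_higher_pderiv_zero by blast
  then show ?thesis unfolding vanishing_poly_def using prod_linear_powers_dvd[OF assms(1)] by blast
qed

lemma degree_vanishing_poly:
  assumes "finite T"
  shows "degree (vanishing_poly (T :: 'a :: idom set) c) = card T * Suc c"
proof -
  have "degree (vanishing_poly T c) = (\<Sum>t\<in>T. degree ([:-t, 1:] ^ Suc c))"
    unfolding vanishing_poly_def by (rule degree_prod_eq_sum_degree) (simp del: power_Suc)
  then show ?thesis by (simp del: power_Suc add: degree_linear_power)
qed

(* Remainders modulo univariate polynomials H_i(x_i), one for each variable, are taken
   coordinatewise: the coefficient of x^d in the remainder of \<Sum>_s w_s x^(E s) is
   \<Sum>_s w_s \<Prod>_i mod_coeff (H i) (d i) (E s i). *)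
definition mod_coeff :: "'a :: field poly \<Rightarrow> nat \<Rightarrow> nat \<Rightarrow> 'a" where
  "mod_coeff H d e = coeff (monom 1 e mod H) d"

lemma coeff_sum_monom_mod:
  fixes H :: "'a :: field poly"
  shows "coeff ((\<Sum>s\<in>S. monom (w s) (E s)) mod H) d = (\<Sum>s\<in>S. w s * mod_coeff H d (E s))"
proof -
  have mod_sum: "(\<Sum>s\<in>S. f s) mod H = (\<Sum>s\<in>S. f s mod H)" for f :: "_ \<Rightarrow> 'a poly"
    by (induction S rule: infinite_finite_induct) (auto simp: poly_mod_add_left)
  have "(\<Sum>s\<in>S. monom (w s) (E s)) mod H = (\<Sum>s\<in>S. smult (w s) (monom 1 (E s) mod H))"
    by (simp add: mod_sum mod_smult_left[symmetric] smult_monom)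
  then show ?thesis by (simp add: mod_coeff_def coeff_sum)
qed

lemma mod_coeff_below_degree: "e < degree H \<Longrightarrow> mod_coeff H d e = (if d = e then 1 else 0)"
  by (simp add: mod_coeff_def mod_poly_less coeff_monom degree_monom_eq)

lemma prod_mod_coeff_of_sum_le:
  assumes "finite I" and "\<forall>i\<in>I. d i < degree (H i)" and "(\<Sum>i\<in>I. e i) \<le> (\<Sum>i\<in>I. d i)"
  shows "(\<Prod>i\<in>I. mod_coeff (H i) (d i) (e i)) = (if \<forall>i\<in>I. e i = d i then 1 else 0)"
proof (cases "\<exists>i\<in>I. e i < d i")
  case True
  then obtain i where "i \<in> I" "e i < d i" by blast
  moreover have "e i < degree (H i)" using \<open>i \<in> I\<close> \<open>e i < d i\<close> assms(2) by fastforce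
  ultimately have "mod_coeff (H i) (d i) (e i) = 0" by (simp add: mod_coeff_below_degree)
  then show ?thesis using assms(1) \<open>i \<in> I\<close> \<open>e i < d i\<close> by (auto intro: prod_zero)
next
  case False
  then have "\<forall>i\<in>I. d i \<le> e i" by (simp add: not_less)
  then have "(\<Sum>i\<in>I. d i) = (\<Sum>i\<in>I. e i)" using assms(3) sum_mono by (metis le_antisym)
  then have "\<forall>i\<in>I. e i = d i"
    using \<open>\<forall>i\<in>I. d i \<le> e i\<close> assms(1) by (metis sum_mono_inv)
  then show ?thesis using assms(2) by (simp add: mod_coeff_below_degree)
qed

lemma sum_prod_mod_coeff_eq_zeroI:
  fixes T :: "'a :: field_char_0 set" and E :: "'b \<Rightarrow> nat \<Rightarrow> nat" and w :: "'b \<Rightarrow> 'a"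
  assumes "finite T" and "finite S" and "finite I"
    and "\<And>a \<beta>. \<forall>i\<in>I. a i \<in> T \<and> \<beta> i \<le> C i \<Longrightarrow>
           (\<Sum>s\<in>S. w s * (\<Prod>i\<in>I. poly ((pderiv ^^ \<beta> i) (monom 1 (E s i))) (a i))) = 0"
  shows "(\<Sum>s\<in>S. w s * (\<Prod>i\<in>I. mod_coeff (vanishing_poly T (C i)) (d i) (E s i))) = 0"
  using assms(3,4)
proof (induction I arbitrary: w rule: finite_induct)
  case empty
  from empty.prems[of undefined "\<lambda>_. 0"] show ?case by simp
next
  case (insert j I)
  let ?H = "vanishing_poly T (C j)"
  define w' where "w' s = w s * mod_coeff ?H (d j) (E s j)" for s
  have "(\<Sum>s\<in>S. w' s * (\<Prod>i\<in>I. mod_coeff (vanishing_poly T (C i)) (d i) (E s i))) = 0"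
  proof (rule insert.IH)
    fix a \<beta> assume box: "\<forall>i\<in>I. a i \<in> T \<and> \<beta> i \<le> C i"
    \<comment> \<open>With the coordinates in I frozen at a, the polynomial u in x_j vanishes to order
      C j + 1 at every node, so vanishing_poly T (C j) divides it.\<close>
    define v where "v s = w s * (\<Prod>i\<in>I. poly ((pderiv ^^ \<beta> i) (monom 1 (E s i))) (a i))" for s
    define u where "u = (\<Sum>s\<in>S. monom (v s) (E s j))"
    have "poly ((pderiv ^^ b) u) t = 0" if "t \<in> T" "b \<le> C j" for t b
    proof -
      have "poly ((pderiv ^^ b) u) t = (\<Sum>s\<in>S. v s * poly ((pderiv ^^ b) (monom 1 (E s j))) t)"
        unfolding u_def by (rule poly_higher_pderiv_sum_monom)
      also have "\<dots> = (\<Sum>s\<in>S. w s * (\<Prod>i\<in>insert j I.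
          poly ((pderiv ^^ (\<beta>(j := b)) i) (monom 1 (E s i))) ((a(j := t)) i)))"
      proof (intro sum.cong refl)
        fix s
        have "(\<Prod>i\<in>I. poly ((pderiv ^^ (\<beta>(j := b)) i) (monom 1 (E s i))) ((a(j := t)) i)) =
              (\<Prod>i\<in>I. poly ((pderiv ^^ \<beta> i) (monom 1 (E s i))) (a i))"
          using insert.hyps by (intro prod.cong) auto
        then show "v s * poly ((pderiv ^^ b) (monom 1 (E s j))) t = w s * (\<Prod>i\<in>insert j I.
          poly ((pderiv ^^ (\<beta>(j := b)) i) (monom 1 (E s i))) ((a(j := t)) i))"
          using insert.hyps by (simp add: v_def)
      qed
      also have "\<dots> = 0" using box that by (intro insert.prems) auto
      finally show ?thesis .
    qed
    then have "?H dvd u" using assms(1) by (intro vanishing_poly_dvd) auto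
    then have "coeff (u mod ?H) (d j) = 0" by simp
    then show "(\<Sum>s\<in>S. w' s * (\<Prod>i\<in>I. poly ((pderiv ^^ \<beta> i) (monom 1 (E s i))) (a i))) = 0"
      unfolding u_def coeff_sum_monom_mod by (simp add: v_def w'_def mult_ac)
  qed
  then show ?case using insert.hyps by (simp add: w'_def mult_ac)
qed

section \<open>Derivatives and evaluation of polynomials given by coefficient functions\<close>

lemma funpow_pd_apply:
  "(pd i ^^ b) Q \<alpha> = pochhammer (real (\<alpha> i) + 1) b * Q (\<alpha>(i := \<alpha> i + b))"
proof (induction b arbitrary: Q \<alpha>)
  case (Suc b)
  have "(pd i ^^ Suc b) Q \<alpha> = (pd i ^^ b) (pd i Q) \<alpha>"
    by (simp only: funpow_Suc_right comp_def)
  also have "\<dots> = pochhammer (real (\<alpha> i) + 1) b * (real (\<alpha> i + b) + 1) * Q (\<alpha>(i := \<alpha> i + Suc b))"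
    by (simp add: Suc.IH pd_def del: fun_upd_apply) (simp add: add_ac)
  also have "\<dots> = pochhammer (real (\<alpha> i) + 1) (Suc b) * Q (\<alpha>(i := \<alpha> i + Suc b))"
    by (simp add: pochhammer_Suc add_ac)
  finally show ?case .
qed simp

lemma foldr_pd_apply:
  "distinct xs \<Longrightarrow> foldr (\<lambda>i R. (pd i ^^ \<beta> i) R) xs Q \<alpha> =
     (\<Prod>i\<in>set xs. pochhammer (real (\<alpha> i) + 1) (\<beta> i)) *
     Q (\<lambda>i. if i \<in> set xs then \<alpha> i + \<beta> i else \<alpha> i)"
proof (induction xs arbitrary: \<alpha>)
  case (Cons x xs)
  let ?\<alpha>' = "\<alpha>(x := \<alpha> x + \<beta> x)"
  have "(\<Prod>i\<in>set xs. pochhammer (real (?\<alpha>' i) + 1) (\<beta> i)) =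
        (\<Prod>i\<in>set xs. pochhammer (real (\<alpha> i) + 1) (\<beta> i))"
    using Cons.prems by (intro prod.cong) auto
  moreover have "(\<lambda>i. if i \<in> set xs then ?\<alpha>' i + \<beta> i else ?\<alpha>' i) =
                 (\<lambda>i. if i \<in> set (x # xs) then \<alpha> i + \<beta> i else \<alpha> i)"
    using Cons.prems by auto
  ultimately show ?case using Cons by (simp add: funpow_pd_apply mult_ac)
qed simp

lemma hpd_apply:
  assumes "\<forall>i\<ge>n. \<beta> i = 0"
  shows "hpd n \<beta> Q \<alpha> = (\<Prod>i<n. pochhammer (real (\<alpha> i) + 1) (\<beta> i)) * Q (\<lambda>i. \<alpha> i + \<beta> i)"
proof -
  have "(\<lambda>i. if i \<in> {..<n} then \<alpha> i + \<beta> i else \<alpha> i) = (\<lambda>i. \<alpha> i + \<beta> i)"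
    using assms by auto
  then show ?thesis unfolding hpd_def using foldr_pd_apply[of "[0..<n]" \<beta> Q \<alpha>]
    by (simp add: atLeast0LessThan)
qed

lemma meval_eq_sum_superset:
  assumes "finite S" and "{\<alpha>. Q \<alpha> \<noteq> 0} \<subseteq> S"
  shows "meval n Q a = (\<Sum>\<alpha>\<in>S. Q \<alpha> * (\<Prod>i<n. a i ^ \<alpha> i))"
  unfolding meval_def using assms by (intro sum.mono_neutral_left) auto

lemma meval_hpd:
  assumes "finite S" and "{\<mu>. Q \<mu> \<noteq> 0} \<subseteq> S" and "\<forall>i\<ge>n. \<beta> i = 0"
  shows "meval n (hpd n \<beta> Q) a =
           (\<Sum>\<mu>\<in>S. Q \<mu> * (\<Prod>i<n. poly ((pderiv ^^ \<beta> i) (monom 1 (\<mu> i))) (a i)))"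
proof -
  define S' where "S' = {\<mu>\<in>S. \<forall>i. \<beta> i \<le> \<mu> i}"
  define sub where "sub \<mu> = (\<lambda>i. \<mu> i - \<beta> i)" for \<mu> :: "nat \<Rightarrow> nat"
  have add_sub: "(\<lambda>i. sub \<mu> i + \<beta> i) = \<mu>" if "\<mu> \<in> S'" for \<mu>
    using that by (auto simp: sub_def S'_def)
  have "{\<alpha>. hpd n \<beta> Q \<alpha> \<noteq> 0} \<subseteq> sub ` S'"
  proof
    fix \<alpha> assume "\<alpha> \<in> {\<alpha>. hpd n \<beta> Q \<alpha> \<noteq> 0}"
    then have "(\<lambda>i. \<alpha> i + \<beta> i) \<in> S'" using assms(2) by (auto simp: hpd_apply[OF assms(3)] S'_def)
    moreover have "\<alpha> = sub (\<lambda>i. \<alpha> i + \<beta> i)" by (simp add: sub_def)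
    ultimately show "\<alpha> \<in> sub ` S'" by blast
  qed
  then have "meval n (hpd n \<beta> Q) a = (\<Sum>\<alpha>\<in>sub ` S'. hpd n \<beta> Q \<alpha> * (\<Prod>i<n. a i ^ \<alpha> i))"
    using assms(1) by (intro meval_eq_sum_superset) (auto simp: S'_def)
  also have "\<dots> = (\<Sum>\<mu>\<in>S'. hpd n \<beta> Q (sub \<mu>) * (\<Prod>i<n. a i ^ sub \<mu> i))"
  proof (rule sum.reindex_cong[OF _ refl refl])
    show "inj_on sub S'"
    proof (rule inj_onI)
      fix \<mu> \<nu> assume "\<mu> \<in> S'" "\<nu> \<in> S'" "sub \<mu> = sub \<nu>"
      then show "\<mu> = \<nu>" using add_sub by metis
    qed
  qed
  also have "\<dots> = (\<Sum>\<mu>\<in>S'. Q \<mu> * (\<Prod>i<n. poly ((pderiv ^^ \<beta> i) (monom 1 (\<mu> i))) (a i)))"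
  proof (rule sum.cong[OF refl])
    fix \<mu> assume "\<mu> \<in> S'"
    then have "(\<Prod>i<n. poly ((pderiv ^^ \<beta> i) (monom 1 (\<mu> i))) (a i)) =
               (\<Prod>i<n. pochhammer (real (sub \<mu> i) + 1) (\<beta> i) * a i ^ sub \<mu> i)"
      by (intro prod.cong) (auto simp: poly_higher_pderiv_monom sub_def S'_def)
    moreover have "hpd n \<beta> Q (sub \<mu>) = (\<Prod>i<n. pochhammer (real (sub \<mu> i) + 1) (\<beta> i)) * Q \<mu>"
      using add_sub[OF \<open>\<mu> \<in> S'\<close>] by (simp add: hpd_apply[OF assms(3)])
    ultimately show "hpd n \<beta> Q (sub \<mu>) * (\<Prod>i<n. a i ^ sub \<mu> i) =
               Q \<mu> * (\<Prod>i<n. poly ((pderiv ^^ \<beta> i) (monom 1 (\<mu> i))) (a i))"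
      by (simp add: prod.distrib)
  qed
  also have "\<dots> = (\<Sum>\<mu>\<in>S. Q \<mu> * (\<Prod>i<n. poly ((pderiv ^^ \<beta> i) (monom 1 (\<mu> i))) (a i)))"
  proof (rule sum.mono_neutral_left[OF assms(1)])
    show "\<forall>\<mu>\<in>S - S'. Q \<mu> * (\<Prod>i<n. poly ((pderiv ^^ \<beta> i) (monom 1 (\<mu> i))) (a i)) = 0"
    proof
      fix \<mu> assume "\<mu> \<in> S - S'"
      then obtain i where "\<mu> i < \<beta> i" by (auto simp: S'_def not_le)
      moreover from this have "i < n" using assms(3) by (metis not_less0 not_le)
      ultimately show "Q \<mu> * (\<Prod>i<n. poly ((pderiv ^^ \<beta> i) (monom 1 (\<mu> i))) (a i)) = 0"
        by (auto simp: poly_higher_pderiv_monom intro!: prod_zero bexI[of _ i])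
    qed
  qed (auto simp: S'_def)
  finally show ?thesis .
qed

lemma meval_hpd_mminus:
  assumes "finite {\<mu>. A \<mu> \<noteq> 0}" and "finite {\<mu>. B \<mu> \<noteq> 0}" and "\<forall>i\<ge>n. \<beta> i = 0"
  shows "meval n (hpd n \<beta> (mminus A B)) a = meval n (hpd n \<beta> A) a - meval n (hpd n \<beta> B) a"
proof -
  let ?S = "{\<mu>. A \<mu> \<noteq> 0} \<union> {\<mu>. B \<mu> \<noteq> 0}"
  let ?W = "\<lambda>\<mu>. \<Prod>i<n. poly ((pderiv ^^ \<beta> i) (monom 1 (\<mu> i))) (a i)"
  have fin: "finite ?S" using assms(1,2) by simp
  have "meval n (hpd n \<beta> (mminus A B)) a = (\<Sum>\<mu>\<in>?S. mminus A B \<mu> * ?W \<mu>)"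
    using fin by (rule meval_hpd) (auto simp: mminus_def assms(3))
  also have "\<dots> = (\<Sum>\<mu>\<in>?S. A \<mu> * ?W \<mu>) - (\<Sum>\<mu>\<in>?S. B \<mu> * ?W \<mu>)"
    by (simp add: mminus_def left_diff_distrib sum_subtractf)
  also have "\<dots> = meval n (hpd n \<beta> A) a - meval n (hpd n \<beta> B) a"
    using meval_hpd[OF fin Un_upper1 assms(3)] meval_hpd[OF fin Un_upper2 assms(3)] by simp
  finally show ?thesis .
qed

lemma mmul_apply:
  assumes "finite {\<beta>. A \<beta> \<noteq> 0}"
  shows "mmul A R \<mu> =
           (\<Sum>\<beta>\<in>{\<beta>. A \<beta> \<noteq> 0}. if \<forall>i. \<beta> i \<le> \<mu> i then A \<beta> * R (\<lambda>i. \<mu> i - \<beta> i) else 0)"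
  unfolding mmul_def
proof (rule sum.cong[OF refl])
  fix \<beta>
  have "{\<gamma>. R \<gamma> \<noteq> 0 \<and> (\<lambda>i. \<beta> i + \<gamma> i) = \<mu>} =
        (if (\<forall>i. \<beta> i \<le> \<mu> i) \<and> R (\<lambda>i. \<mu> i - \<beta> i) \<noteq> 0 then {\<lambda>i. \<mu> i - \<beta> i} else {})"
  proof (cases "\<forall>i. \<beta> i \<le> \<mu> i")
    case True
    then have "(\<lambda>i. \<beta> i + \<gamma> i) = \<mu> \<longleftrightarrow> \<gamma> = (\<lambda>i. \<mu> i - \<beta> i)" for \<gamma>
      by (auto simp: fun_eq_iff) (metis add_diff_cancel_left')
    then show ?thesis using True by auto
  next
    case False
    then obtain i where "\<not> \<beta> i \<le> \<mu> i" by blast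
    then have "(\<lambda>i. \<beta> i + \<gamma> i) \<noteq> \<mu>" for \<gamma> by (metis le_add1)
    then show ?thesis using False by auto
  qed
  then show "(\<Sum>\<gamma>\<in>{\<gamma>. R \<gamma> \<noteq> 0 \<and> (\<lambda>i. \<beta> i + \<gamma> i) = \<mu>}. A \<beta> * R \<gamma>) =
     (if \<forall>i. \<beta> i \<le> \<mu> i then A \<beta> * R (\<lambda>i. \<mu> i - \<beta> i) else 0)"
    by auto
qed

lemma finite_support_var_poly: "finite {\<beta>. var_poly x g \<beta> \<noteq> 0}"
proof -
  have "{\<beta>. var_poly x g \<beta> \<noteq> 0} \<subseteq> (\<lambda>e i. if i = x then e else 0) ` {..degree g}"
  proof
    fix \<beta> assume "\<beta> \<in> {\<beta>. var_poly x g \<beta> \<noteq> 0}"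
    then have "\<forall>j. j \<noteq> x \<longrightarrow> \<beta> j = 0" and "coeff g (\<beta> x) \<noteq> 0"
      by (auto simp: var_poly_def split: if_splits)
    then show "\<beta> \<in> (\<lambda>e i. if i = x then e else 0) ` {..degree g}"
      by (intro image_eqI[of _ _ "\<beta> x"]) (auto simp: le_degree)
  qed
  then show ?thesis by (rule finite_subset) simp
qed

lemma mmul_var_poly_apply:
  assumes "\<forall>\<gamma>. R \<gamma> \<noteq> 0 \<longrightarrow> \<gamma> x = 0"
  shows "mmul (var_poly x g) R \<mu> = coeff g (\<mu> x) * R (\<mu>(x := 0))"
proof -
  define \<beta>\<^sub>0 where "\<beta>\<^sub>0 = (\<lambda>i. if i = x then \<mu> x else (0::nat))"
  have diff0: "(\<lambda>i. \<mu> i - \<beta>\<^sub>0 i) = \<mu>(x := 0)" by (auto simp: \<beta>\<^sub>0_def)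
  have "mmul (var_poly x g) R \<mu> =
     (\<Sum>\<beta>\<in>{\<beta>. var_poly x g \<beta> \<noteq> 0}. if \<beta> = \<beta>\<^sub>0 then var_poly x g \<beta>\<^sub>0 * R (\<mu>(x := 0)) else 0)"
    unfolding mmul_apply[OF finite_support_var_poly]
  proof (rule sum.cong[OF refl])
    fix \<beta> assume "\<beta> \<in> {\<beta>. var_poly x g \<beta> \<noteq> 0}"
    then have off_x: "\<forall>j. j \<noteq> x \<longrightarrow> \<beta> j = 0" by (auto simp: var_poly_def split: if_splits)
    show "(if \<forall>i. \<beta> i \<le> \<mu> i then var_poly x g \<beta> * R (\<lambda>i. \<mu> i - \<beta> i) else 0) =
          (if \<beta> = \<beta>\<^sub>0 then var_poly x g \<beta>\<^sub>0 * R (\<mu>(x := 0)) else 0)"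
    proof (cases "\<beta> = \<beta>\<^sub>0")
      case False
      then have "\<beta> x \<noteq> \<mu> x" using off_x by (auto simp: \<beta>\<^sub>0_def)
      then have "R (\<lambda>i. \<mu> i - \<beta> i) = 0" if "\<forall>i. \<beta> i \<le> \<mu> i"
        using assms that by (metis diff_is_0_eq le_antisym)
      then show ?thesis using False by auto
    next
      case True
      have "\<forall>i. \<beta>\<^sub>0 i \<le> \<mu> i" by (simp add: \<beta>\<^sub>0_def)
      then show ?thesis using True diff0 by simp
    qed
  qed
  also have "\<dots> = var_poly x g \<beta>\<^sub>0 * R (\<mu>(x := 0))"
    using finite_support_var_poly by (simp add: sum.delta')
  finally show ?thesis by (simp add: var_poly_def \<beta>\<^sub>0_def)
qed

lemma foldr_mmul_var_poly_apply:
  "distinct xs \<Longrightarrow> foldr (\<lambda>i acc. mmul (var_poly i g) acc) xs mone \<mu> =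
     (if \<forall>i. i \<notin> set xs \<longrightarrow> \<mu> i = 0 then \<Prod>i\<in>set xs. coeff g (\<mu> i) else 0)"
proof (induction xs arbitrary: \<mu>)
  case Nil
  then show ?case by (auto simp: mone_def fun_eq_iff)
next
  case (Cons x xs)
  have "x \<notin> set xs" using Cons.prems by simp
  let ?R = "foldr (\<lambda>i acc. mmul (var_poly i g) acc) xs mone"
  have "\<forall>\<gamma>. ?R \<gamma> \<noteq> 0 \<longrightarrow> \<gamma> x = 0" using Cons \<open>x \<notin> set xs\<close> by auto
  then have "foldr (\<lambda>i acc. mmul (var_poly i g) acc) (x # xs) mone \<mu> = coeff g (\<mu> x) * ?R (\<mu>(x := 0))"
    by (simp add: mmul_var_poly_apply)
  moreover have "(\<Prod>i\<in>set xs. coeff g ((\<mu>(x := 0)) i)) = (\<Prod>i\<in>set xs. coeff g (\<mu> i))"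
    using \<open>x \<notin> set xs\<close> by (intro prod.cong) auto
  ultimately show ?case using Cons \<open>x \<notin> set xs\<close> by auto
qed

lemma prod_vars_apply:
  "prod_vars n g \<mu> = (if \<forall>i\<ge>n. \<mu> i = 0 then \<Prod>i<n. coeff g (\<mu> i) else 0)"
proof -
  have "(\<forall>i. i \<notin> {..<n} \<longrightarrow> \<mu> i = 0) = (\<forall>i\<ge>n. \<mu> i = 0)" by auto
  then show ?thesis
    by (simp only: prod_vars_def foldr_mmul_var_poly_apply[OF distinct_upt] set_upt atLeast0LessThan)
qed

lemma support_prod_vars_subset:
  "{\<mu>. prod_vars n g \<mu> \<noteq> 0} \<subseteq>
     (\<lambda>h i. if i < n then h i else 0) ` (\<Pi>\<^sub>E i\<in>{..<n}. {..degree g})"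
proof
  fix \<mu> assume "\<mu> \<in> {\<mu>. prod_vars n g \<mu> \<noteq> 0}"
  then have "\<forall>i\<ge>n. \<mu> i = 0" and "\<forall>i<n. coeff g (\<mu> i) \<noteq> 0"
    by (auto simp: prod_vars_apply split: if_splits)
  then show "\<mu> \<in> (\<lambda>h i. if i < n then h i else 0) ` (\<Pi>\<^sub>E i\<in>{..<n}. {..degree g})"
    by (intro image_eqI[of _ _ "restrict \<mu> {..<n}"]) (auto simp: le_degree not_less)
qed

lemma is_mpoly_prod_vars: "is_mpoly n (prod_vars n g)"
  unfolding is_mpoly_def
  using finite_subset[OF support_prod_vars_subset] by (auto simp: prod_vars_apply finite_PiE)

lemma meval_hpd_prod_vars:
  assumes "\<forall>i\<ge>n. \<beta> i = 0"
  shows "meval n (hpd n \<beta> (prod_vars n g)) a = (\<Prod>i<n. poly ((pderiv ^^ \<beta> i) g) (a i))"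
proof -
  define ext where "ext h = (\<lambda>i. if i < n then h i else 0)" for h :: "nat \<Rightarrow> nat"
  let ?B = "\<Pi>\<^sub>E i\<in>{..<n}. {..degree g}"
  let ?D = "\<lambda>i e. poly ((pderiv ^^ \<beta> i) (monom 1 e)) (a i)"
  have "inj_on ext ?B"
  proof (rule inj_onI)
    fix h h' assume "h \<in> ?B" "h' \<in> ?B" "ext h = ext h'"
    then show "h = h'" by (intro PiE_ext[of h _ _ h']) (auto simp: ext_def fun_eq_iff, metis)
  qed
  have "meval n (hpd n \<beta> (prod_vars n g)) a = (\<Sum>\<mu>\<in>ext ` ?B. prod_vars n g \<mu> * (\<Prod>i<n. ?D i (\<mu> i)))"
    using support_prod_vars_subset assms unfolding ext_def by (intro meval_hpd) (auto simp: finite_PiE)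
  also have "\<dots> = (\<Sum>h\<in>?B. \<Prod>i<n. coeff g (h i) * ?D i (h i))"
  proof -
    have "prod_vars n g (ext h) = (\<Prod>i<n. coeff g (h i))" for h
      by (simp add: prod_vars_apply ext_def)
    moreover have "(\<Prod>i<n. ?D i (ext h i)) = (\<Prod>i<n. ?D i (h i))" for h
      by (rule prod.cong) (auto simp: ext_def)
    ultimately show ?thesis
      using \<open>inj_on ext ?B\<close> by (simp add: sum.reindex prod.distrib)
  qed
  also have "\<dots> = (\<Prod>i<n. \<Sum>e\<le>degree g. coeff g e * ?D i e)"
    by (rule prod_sum_PiE[symmetric]) auto
  also have "\<dots> = (\<Prod>i<n. poly ((pderiv ^^ \<beta> i) g) (a i))"
    by (simp add: poly_higher_pderiv_sum_monom[symmetric] poly_as_sum_of_monoms)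
  finally show ?thesis .
qed

lemma xprod_pow_mdvdI:
  assumes "is_mpoly n Q" and "\<forall>\<alpha>. Q \<alpha> \<noteq> 0 \<longrightarrow> (\<forall>i<n. m \<le> \<alpha> i)"
  shows "mdvd n (xprod_pow n m) Q"
proof -
  define \<beta>\<^sub>0 where "\<beta>\<^sub>0 = (\<lambda>i. if i < n then m else 0)"
  define R where "R \<mu> = Q (\<lambda>i. \<mu> i + \<beta>\<^sub>0 i)" for \<mu>
  have support: "Q \<alpha> \<noteq> 0 \<Longrightarrow> (\<forall>i. \<beta>\<^sub>0 i \<le> \<alpha> i) \<and> (\<forall>i\<ge>n. \<alpha> i = 0)" for \<alpha>
    using assms by (auto simp: is_mpoly_def \<beta>\<^sub>0_def)
  have "{\<mu>. R \<mu> \<noteq> 0} \<subseteq> (\<lambda>\<alpha> i. \<alpha> i - \<beta>\<^sub>0 i) ` {\<alpha>. Q \<alpha> \<noteq> 0}"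
    by (auto simp: R_def intro!: image_eqI[of _ _ "\<lambda>i. _ i + \<beta>\<^sub>0 i"])
  then have "is_mpoly n R"
    using assms(1) finite_subset support unfolding is_mpoly_def R_def \<beta>\<^sub>0_def by fastforce
  moreover have "Q = mmul (xprod_pow n m) R"
  proof
    fix \<mu>
    have monomial: "{\<beta>. xprod_pow n m \<beta> \<noteq> 0} = {\<beta>\<^sub>0}" and "xprod_pow n m \<beta>\<^sub>0 = 1"
      by (auto simp: xprod_pow_def \<beta>\<^sub>0_def)
    then have "mmul (xprod_pow n m) R \<mu> = (if \<forall>i. \<beta>\<^sub>0 i \<le> \<mu> i then R (\<lambda>i. \<mu> i - \<beta>\<^sub>0 i) else 0)"
      using mmul_apply[of "xprod_pow n m" R \<mu>, unfolded monomial] by simp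
    also have "\<dots> = Q \<mu>" using support[of \<mu>] by (auto simp: R_def)
    finally show "Q \<mu> = mmul (xprod_pow n m) R \<mu>" ..
  qed
  ultimately show ?thesis by (auto simp: mdvd_def)
qed

section \<open>Top-degree monomials of the reduced interpolant\<close>

lemma ex_pointwise_le_with_sum:
  fixes c :: "nat \<Rightarrow> nat"
  assumes "k \<le> (\<Sum>i<n. c i)"
  shows "\<exists>c'. (\<Sum>i<n. c' i) = k \<and> (\<forall>i<n. c' i \<le> c i)"
  using assms
proof (induction n arbitrary: k)
  case (Suc n)
  show ?case
  proof (cases "k \<le> (\<Sum>i<n. c i)")
    case True
    then obtain c' where "(\<Sum>i<n. c' i) = k" "\<forall>i<n. c' i \<le> c i" using Suc.IH by blast
    then show ?thesis by (intro exI[of _ "c'(n := 0)"]) (auto simp: less_Suc_eq)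
  next
    case False
    have "(\<Sum>i<n. (c(n := k - (\<Sum>i<n. c i))) i) = (\<Sum>i<n. c i)" by (rule sum.cong) auto
    then show ?thesis using False Suc.prems
      by (intro exI[of _ "c(n := k - (\<Sum>i<n. c i))"]) (auto simp: less_Suc_eq)
  qed
qed simp

lemma reduced_sum_div_less:
  assumes "reduced n m k Q" and "Q \<alpha> \<noteq> 0"
  shows "(\<Sum>i<n. \<alpha> i div Suc m) < k"
proof (rule ccontr)
  assume "\<not> ?thesis"
  then obtain c where c: "(\<Sum>i<n. c i) = k" "\<forall>i<n. c i \<le> \<alpha> i div Suc m"
    using ex_pointwise_le_with_sum[where k = k and n = n] by (auto simp: not_less)
  have "(m + 1) * c i \<le> \<alpha> i" if "i < n" for i
    using c(2) that by (metis Suc_eq_plus1 div_times_less_eq_dividend mult.commute mult_le_mono2 order_trans)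
  then show False using assms c(1) unfolding reduced_def by blast
qed

lemma meval_hpd_vanishes_on_root_hyperplane:
  assumes "is_mpoly n Q" and "zero_mult_ge n (mminus (prod_vars n g) Q) a k"
    and "j < n" and "poly g (a j) = 0"
    and "\<beta> j = 0" and "\<forall>i\<ge>n. \<beta> i = 0" and "mdeg n \<beta> < k"
  shows "meval n (hpd n \<beta> Q) a = 0"
proof -
  have "meval n (hpd n \<beta> (prod_vars n g)) a = 0"
    using assms(3-6) by (auto simp: meval_hpd_prod_vars intro!: prod_zero bexI[of _ j])
  moreover have "meval n (hpd n \<beta> (mminus (prod_vars n g) Q)) a = 0"
    using assms(2,6,7) by (simp add: zero_mult_ge_def)
  ultimately show ?thesis
    using assms(1,6) is_mpoly_prod_vars[of n g] by (simp add: meval_hpd_mminus is_mpoly_def)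
qed

lemma grid_sum_times_var_vanishes:
  fixes Q :: mpoly and a \<beta> :: "nat \<Rightarrow> nat"
  assumes "is_mpoly n Q" and "j < n" and roots: "\<forall>t\<in>{1..m}. poly g (real t) = 0"
    and vanish: "\<And>a::nat \<Rightarrow> nat. (\<forall>i<n. a i \<le> m) \<Longrightarrow> (\<exists>i<n. a i \<noteq> 0) \<Longrightarrow>
           zero_mult_ge n (mminus (prod_vars n g) Q) (\<lambda>i. real (a i)) k"
    and "\<forall>i<n. a i \<le> m" and "\<beta> j = 0" and "(\<Sum>i<n. \<beta> i) < k"
  shows "(\<Sum>s\<in>{\<mu>. Q \<mu> \<noteq> 0}. Q s *
           (\<Prod>i<n. poly ((pderiv ^^ \<beta> i) (monom 1 (s i + of_bool (i = j)))) (real (a i)))) = 0"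
proof -
  define \<beta>' where "\<beta>' i = (if i < n then \<beta> i else 0)" for i
  let ?D = "\<lambda>b e x. poly ((pderiv ^^ b) (monom 1 e)) (x :: real)"
  have "?D (\<beta> i) (s i + of_bool (i = j)) (real (a i)) =
          (if i = j then real (a j) else 1) * ?D (\<beta>' i) (s i) (real (a i))" if "i < n" for s i
    using that assms(6) by (auto simp: \<beta>'_def poly_monom)
  then have factor: "(\<Prod>i<n. ?D (\<beta> i) (s i + of_bool (i = j)) (real (a i))) =
             real (a j) * (\<Prod>i<n. ?D (\<beta>' i) (s i) (real (a i)))" for s
    using assms(2) by (simp add: prod.distrib prod.delta)
  have "(\<Sum>s\<in>{\<mu>. Q \<mu> \<noteq> 0}. Q s * (\<Prod>i<n. ?D (\<beta> i) (s i + of_bool (i = j)) (real (a i)))) =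
             real (a j) * meval n (hpd n \<beta>' Q) (\<lambda>i. real (a i))"
  proof -
    have "meval n (hpd n \<beta>' Q) (\<lambda>i. real (a i)) =
          (\<Sum>s\<in>{\<mu>. Q \<mu> \<noteq> 0}. Q s * (\<Prod>i<n. ?D (\<beta>' i) (s i) (real (a i))))"
      using assms(1) by (intro meval_hpd) (auto simp: is_mpoly_def \<beta>'_def)
    then show ?thesis by (simp add: factor sum_distrib_left mult_ac)
  qed
  also have "\<dots> = 0"
  proof (cases "a j = 0")
    case False
    have "mdeg n \<beta>' = (\<Sum>i<n. \<beta> i)" unfolding mdeg_def \<beta>'_def by simp
    then have "meval n (hpd n \<beta>' Q) (\<lambda>i. real (a i)) = 0"
      using False assms(2,5-7) roots
      by (intro meval_hpd_vanishes_on_root_hyperplane[OF assms(1) vanish]) (auto simp: \<beta>'_def)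
    then show ?thesis by simp
  qed simp
  finally show ?thesis .
qed

lemma sum_prod_mod_coeff_top_monomial:
  assumes "is_mpoly n Q" and "Q \<alpha> \<noteq> 0" and top: "\<forall>\<mu>. Q \<mu> \<noteq> 0 \<longrightarrow> mdeg n \<mu> \<le> mdeg n \<alpha>"
    and "j < n" and "\<forall>i\<in>{..<n}. \<alpha> i + of_bool (i = j) < degree (H i)"
  shows "(\<Sum>s\<in>{\<mu>. Q \<mu> \<noteq> 0}. Q s *
           (\<Prod>i\<in>{..<n}. mod_coeff (H i) (\<alpha> i + of_bool (i = j)) (s i + of_bool (i = j)))) = Q \<alpha>"
proof -
  have "(\<Prod>i\<in>{..<n}. mod_coeff (H i) (\<alpha> i + of_bool (i = j)) (s i + of_bool (i = j))) =
          (if s = \<alpha> then 1 else 0)" if "Q s \<noteq> 0" for s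
  proof -
    have "\<forall>i\<ge>n. s i = 0 \<and> \<alpha> i = 0" using assms(1,2) that by (simp add: is_mpoly_def)
    then have "(\<forall>i\<in>{..<n}. s i + of_bool (i = j) = \<alpha> i + of_bool (i = j)) \<longleftrightarrow> s = \<alpha>"
      by (auto simp: fun_eq_iff not_less[symmetric])
    moreover have "(\<Sum>i<n. s i + of_bool (i = j)) \<le> (\<Sum>i<n. \<alpha> i + of_bool (i = j))"
      using top that \<open>j < n\<close> by (simp add: sum.distrib mdeg_def)
    ultimately show ?thesis using prod_mod_coeff_of_sum_le[OF _ assms(5)] by simp
  qed
  then have "(\<Sum>s\<in>{\<mu>. Q \<mu> \<noteq> 0}. Q s *
           (\<Prod>i\<in>{..<n}. mod_coeff (H i) (\<alpha> i + of_bool (i = j)) (s i + of_bool (i = j)))) =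
        (\<Sum>s\<in>{\<mu>. Q \<mu> \<noteq> 0}. if s = \<alpha> then Q s else 0)"
    by (intro sum.cong) auto
  also have "\<dots> = Q \<alpha>" using assms(1,2) by (simp add: is_mpoly_def)
  finally show ?thesis .
qed

lemma top_degree_exponent_ge:
  fixes Q :: mpoly
  assumes red: "reduced n m k Q" and roots: "\<forall>t\<in>{1..m}. poly g (real t) = 0"
    and vanish: "\<And>a::nat \<Rightarrow> nat. (\<forall>i<n. a i \<le> m) \<Longrightarrow> (\<exists>i<n. a i \<noteq> 0) \<Longrightarrow>
           zero_mult_ge n (mminus (prod_vars n g) Q) (\<lambda>i. real (a i)) k"
    and "Q \<alpha> \<noteq> 0" and top: "\<forall>\<mu>. Q \<mu> \<noteq> 0 \<longrightarrow> mdeg n \<mu> \<le> mdeg n \<alpha>" and "j < n"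
  shows "m \<le> \<alpha> j"
proof (rule ccontr)
  assume "\<not> m \<le> \<alpha> j"
  define E where "E s = (\<lambda>i. s i + of_bool (i = j))" for s :: "nat \<Rightarrow> nat"
  define C where "C i = \<alpha> i div Suc m" for i
  define T where "T = real ` {..m}"
  define H where "H i = vanishing_poly T (C i)" for i
  have mpoly: "is_mpoly n Q" using red by (simp add: reduced_def)
  have deg_H: "\<forall>i\<in>{..<n}. E \<alpha> i < degree (H i)"
    using \<open>\<not> m \<le> \<alpha> j\<close> dividend_less_times_div[of "Suc m"]
    by (auto simp: H_def T_def degree_vanishing_poly card_image E_def C_def)
  have "(\<Sum>s\<in>{\<mu>. Q \<mu> \<noteq> 0}. Q s * (\<Prod>i\<in>{..<n}. mod_coeff (H i) (E \<alpha> i) (E s i))) = 0"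
    unfolding H_def
  proof (rule sum_prod_mod_coeff_eq_zeroI)
    fix a \<beta> assume grid: "\<forall>i\<in>{..<n}. a i \<in> T \<and> \<beta> i \<le> C i"
    define a' where "a' i = nat \<lfloor>a i\<rfloor>" for i
    have a': "a i = real (a' i) \<and> a' i \<le> m" if i: "i < n" for i
    proof -
      obtain t where "t \<le> m" "a i = real t" using grid i by (auto simp: T_def)
      then show ?thesis by (simp add: a'_def)
    qed
    have "C j = 0" using \<open>\<not> m \<le> \<alpha> j\<close> by (simp add: C_def)
    then have "\<beta> j = 0" using grid \<open>j < n\<close> by (metis le_zero_eq lessThan_iff)
    moreover have "(\<Sum>i<n. \<beta> i) < k"
      using grid reduced_sum_div_less[OF red \<open>Q \<alpha> \<noteq> 0\<close>] sum_mono[of "{..<n}" \<beta> C]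
      by (auto simp: C_def)
    ultimately have "(\<Sum>s\<in>{\<mu>. Q \<mu> \<noteq> 0}. Q s *
        (\<Prod>i<n. poly ((pderiv ^^ \<beta> i) (monom 1 (E s i))) (real (a' i)))) = 0"
      using a' unfolding E_def by (intro grid_sum_times_var_vanishes[OF mpoly \<open>j < n\<close> roots vanish]) auto
    moreover have "(\<Prod>i<n. poly ((pderiv ^^ \<beta> i) (monom 1 (E s i))) (a i)) =
          (\<Prod>i<n. poly ((pderiv ^^ \<beta> i) (monom 1 (E s i))) (real (a' i)))" for s
      using a' by (intro prod.cong) auto
    ultimately show "(\<Sum>s\<in>{\<mu>. Q \<mu> \<noteq> 0}. Q s *
        (\<Prod>i\<in>{..<n}. poly ((pderiv ^^ \<beta> i) (monom 1 (E s i))) (a i))) = 0" by simp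
  qed (use mpoly in \<open>auto simp: T_def is_mpoly_def\<close>)
  moreover have "(\<Sum>s\<in>{\<mu>. Q \<mu> \<noteq> 0}. Q s * (\<Prod>i\<in>{..<n}. mod_coeff (H i) (E \<alpha> i) (E s i))) = Q \<alpha>"
    unfolding E_def using mpoly \<open>Q \<alpha> \<noteq> 0\<close> top \<open>j < n\<close> deg_H[unfolded E_def]
    by (rule sum_prod_mod_coeff_top_monomial)
  ultimately show False using \<open>Q \<alpha> \<noteq> 0\<close> by simp
qed

theorem claim5p3:
  fixes n m k :: nat and P0 :: mpoly
  assumes "m \<ge> 1" and "k \<ge> 2" and "n \<ge> k - 1"
    and "reduced n m k P0"
    and "\<And>a::nat \<Rightarrow> nat. (\<forall>i<n. a i \<le> m) \<Longrightarrow> (\<exists>i<n. a i \<noteq> 0) \<Longrightarrow>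
           zero_mult_ge n (mminus (prod_vars n (shifted_ffact m ^ k)) P0) (\<lambda>i. real (a i)) k"
    and "zero_mult_ge n (mminus (prod_vars n (shifted_ffact m ^ k)) P0) (\<lambda>_. 0) (k - 1)"
  shows "mdvd n (xprod_pow n m) (hom_comp n (m * n + (m + 1) * (k - 1) - 1) P0)"
proof -
  define D where "D = m * n + (m + 1) * (k - 1) - 1"
  have "is_mpoly n P0" and degree_le: "\<forall>\<mu>. P0 \<mu> \<noteq> 0 \<longrightarrow> mdeg n \<mu> \<le> D"
    using assms(4) by (auto simp: reduced_def D_def)
  have roots: "\<forall>t\<in>{1..m}. poly (shifted_ffact m ^ k) (real t) = 0"
    using assms(2) by (auto simp: shifted_ffact_def poly_prod)
  have "is_mpoly n (hom_comp n D P0)"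
    using \<open>is_mpoly n P0\<close> by (auto simp: is_mpoly_def hom_comp_def elim: finite_subset[rotated])
  moreover have "\<forall>i<n. m \<le> \<alpha> i" if "hom_comp n D P0 \<alpha> \<noteq> 0" for \<alpha>
  proof -
    have "P0 \<alpha> \<noteq> 0" and "mdeg n \<alpha> = D" using that by (auto simp: hom_comp_def split: if_splits)
    then show ?thesis
      using top_degree_exponent_ge[OF assms(4) roots assms(5)] degree_le by metis
  qed
  ultimately show ?thesis unfolding D_def by (intro xprod_pow_mdvdI) auto
qed

end
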